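(* Let $F$ and $G$ be connected finite simple graphs such that $G$ is a $k$-fold cover of $F$. Then $\gamma_c(G) \leq k(\gamma_c(F) + 2) - 2$. Moreover, this bound is tight: for every positive integer $k$ there exist connected graphs $F$ and $G$ with $G$ a $k$-fold cover of $F$ such that $\gamma_c(G) = k(\gamma_c(F)+2) - 2$.
   Context: All graphs are finite, simple and undirected. A graph $G$ is a cover of a graph $F$ if there is an onto map $\pi: V(G)\to V(F)$ such that for every vertex $v$ of $G$, $\pi$ maps the neighbours of $v$ in $G$ bijectively onto the neighbours of $\pi(v)$ in $F$; the cover is $k$-fold if every fibre $\pi^{-1}(u)$ has exactly $k$ vertices. A connected dominating set of a graph is a set $S$ of vertices such that every vertex not in $S$ is adjacent to some vertex of $S$ and the subgraph induced by $S$ is connected; $\gamma_c(\cdot)$ denotes the connected domination number, the minimum size of a connected dominating set (defined for connected graphs). *)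

theory Defs
  imports Main
begin

definition simple_graph :: "'a set \<Rightarrow> ('a \<Rightarrow> 'a \<Rightarrow> bool) \<Rightarrow> bool" where
  "simple_graph V E \<longleftrightarrow> finite V \<and> (\<forall>x y. E x y \<longrightarrow> x \<in> V \<and> y \<in> V)
     \<and> (\<forall>x y. E x y \<longrightarrow> E y x) \<and> (\<forall>x. \<not> E x x)"

definition neighbours :: "'a set \<Rightarrow> ('a \<Rightarrow> 'a \<Rightarrow> bool) \<Rightarrow> 'a \<Rightarrow> 'a set" where
  "neighbours V E v = {w \<in> V. E v w}"

definition connected_on :: "'a set \<Rightarrow> ('a \<Rightarrow> 'a \<Rightarrow> bool) \<Rightarrow> bool" where
  "connected_on S E \<longleftrightarrow> S \<noteq> {} \<and>
     (\<forall>x\<in>S. \<forall>y\<in>S. (\<lambda>a b. a \<in> S \<and> b \<in> S \<and> E a b)\<^sup>*\<^sup>* x y)"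

definition connected_graph :: "'a set \<Rightarrow> ('a \<Rightarrow> 'a \<Rightarrow> bool) \<Rightarrow> bool" where
  "connected_graph V E \<longleftrightarrow> simple_graph V E \<and> connected_on V E"

definition connected_dominating_set ::
    "'a set \<Rightarrow> ('a \<Rightarrow> 'a \<Rightarrow> bool) \<Rightarrow> 'a set \<Rightarrow> bool" where
  "connected_dominating_set V E S \<longleftrightarrow> S \<subseteq> V
     \<and> (\<forall>v\<in>V - S. \<exists>s\<in>S. E v s) \<and> connected_on S E"

definition conn_dom_number :: "'a set \<Rightarrow> ('a \<Rightarrow> 'a \<Rightarrow> bool) \<Rightarrow> nat" where
  "conn_dom_number V E = (LEAST n. \<exists>S. connected_dominating_set V E S \<and> card S = n)"

definition is_cover ::
    "'a set \<Rightarrow> ('a \<Rightarrow> 'a \<Rightarrow> bool) \<Rightarrow> 'b set \<Rightarrow> ('b \<Rightarrow> 'b \<Rightarrow> bool) \<Rightarrow> ('a \<Rightarrow> 'b) \<Rightarrow> bool" where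
  "is_cover VG EG VF EF p \<longleftrightarrow> p ` VG = VF
     \<and> (\<forall>v\<in>VG. bij_betw p (neighbours VG EG v) (neighbours VF EF (p v)))"

definition is_k_fold_cover ::
    "nat \<Rightarrow> 'a set \<Rightarrow> ('a \<Rightarrow> 'a \<Rightarrow> bool) \<Rightarrow> 'b set \<Rightarrow> ('b \<Rightarrow> 'b \<Rightarrow> bool) \<Rightarrow> ('a \<Rightarrow> 'b) \<Rightarrow> bool" where
  "is_k_fold_cover k VG EG VF EF p \<longleftrightarrow> is_cover VG EG VF EF p
     \<and> (\<forall>u\<in>VF. card {v \<in> VG. p v = u} = k)"

end

theory Submission
  imports Defs
begin

text \<open>Upper bound: take a minimum connected dominating set S of F and let D be its preimage in G,
so card D = k * card S and D dominates G. Walks in S lift to walks in D, so every vertex of D is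
joined inside D to one of the k lifts of a fixed vertex of S: D has at most k components. As D
dominates the connected graph G, two of its components are always joined through at most two
further vertices, so at most 2 (k - 1) vertices make D connected.

Tightness: the cycle of length 3k covers the triangle via reduction mod 3, and the connected
domination number of the n-cycle is n - 2, which for n = 3k equals k (1 + 2) - 2. In the n-cycle
the lower bound holds because a connected dominating set missing a vertex (rotated to 0) is an
interval of the path 1, ..., n - 1 that must come within distance one of both of its ends.\<close>

definition reachable_in :: "'a set \<Rightarrow> ('a \<Rightarrow> 'a \<Rightarrow> bool) \<Rightarrow> 'a \<Rightarrow> 'a \<Rightarrow> bool" where
  "reachable_in S E = (\<lambda>a b. a \<in> S \<and> b \<in> S \<and> E a b)\<^sup>*\<^sup>*"

lemma connected_on_iff_reachable_in:
  "connected_on S E \<longleftrightarrow> S \<noteq> {} \<and> (\<forall>x\<in>S. \<forall>y\<in>S. reachable_in S E x y)"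
  by (simp add: connected_on_def reachable_in_def)

lemma reachable_in_refl [simp]: "reachable_in S E x x"
  by (simp add: reachable_in_def)

lemma reachable_in_step:
  "reachable_in S E x y \<Longrightarrow> y \<in> S \<Longrightarrow> z \<in> S \<Longrightarrow> E y z \<Longrightarrow> reachable_in S E x z"
  unfolding reachable_in_def by (rule rtranclp.rtrancl_into_rtrancl) auto

lemma reachable_in_trans:
  "reachable_in S E x y \<Longrightarrow> reachable_in S E y z \<Longrightarrow> reachable_in S E x z"
  unfolding reachable_in_def by (rule rtranclp_trans)

lemma reachable_in_mono:
  assumes "reachable_in S E x y" "S \<subseteq> T"
  shows "reachable_in T E x y"
  using assms(1) unfolding reachable_in_def
  by (rule rtranclp_mono[THEN predicate2D, rotated]) (use assms(2) in auto)

lemma reachable_in_closed: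
  assumes "reachable_in S E x y" "x \<in> S"
  shows "y \<in> S"
  using assms unfolding reachable_in_def by (induction rule: rtranclp_induct) auto

lemma reachable_in_sym:
  assumes "\<And>x y. E x y \<Longrightarrow> E y x" "reachable_in S E x y"
  shows "reachable_in S E y x"
  using assms(2) unfolding reachable_in_def
proof (induction rule: rtranclp_induct)
  case (step y z)
  then show ?case
    using assms(1) by (auto intro: converse_rtranclp_into_rtranclp)
qed simp

lemma reachable_in_image:
  assumes "reachable_in S E x y" "\<And>a b. a \<in> S \<Longrightarrow> b \<in> S \<Longrightarrow> E a b \<Longrightarrow> E' (g a) (g b)"
  shows "reachable_in (g ` S) E' (g x) (g y)"
  using assms(1) unfolding reachable_in_def
proof (induction rule: rtranclp_induct)
  case (step y z)
  then show ?case using assms(2) by (auto intro: rtranclp.rtrancl_into_rtrancl)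
qed simp

lemma connected_on_exists_crossing_edge:
  assumes "connected_on V E" "A \<subseteq> V" "a \<in> A" "b \<in> V - A"
  shows "\<exists>y\<in>A. \<exists>w\<in>V - A. E y w"
proof -
  have "b \<notin> A \<longrightarrow> (\<exists>y\<in>A. \<exists>w\<in>V - A. E y w)" if "reachable_in V E a b" for b
    using that unfolding reachable_in_def
    by (induction rule: rtranclp_induct) (use assms(3) in blast)+
  then show ?thesis
    using assms by (auto simp: connected_on_iff_reachable_in)
qed

lemma connected_on_if_reachable_from:
  assumes "\<And>x y. E x y \<Longrightarrow> E y x" "r \<in> S" "\<forall>x\<in>S. reachable_in S E r x"
  shows "connected_on S E"
  unfolding connected_on_iff_reachable_in
proof (intro conjI ballI)
  fix x y
  assume "x \<in> S" "y \<in> S"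
  then have "reachable_in S E x r" "reachable_in S E r y"
    using assms(1,3) by (blast intro: reachable_in_sym)+
  then show "reachable_in S E x y"
    by (rule reachable_in_trans)
qed (use assms(2) in blast)

lemma dominating_set_bridge:
  assumes sg: "simple_graph V E" and con: "connected_on V E"
    and DV: "D \<subseteq> V" and dom: "\<forall>v\<in>V - D. \<exists>s\<in>D. E v s"
    and C: "C \<subseteq> D" "c0 \<in> C" "z0 \<in> D - C"
    and closed: "\<And>x y. x \<in> C \<Longrightarrow> y \<in> D \<Longrightarrow> E x y \<Longrightarrow> y \<in> C"
  obtains c y w d where "c \<in> C" "d \<in> D - C" "y \<in> V" "w \<in> V" "E c y" "y = w \<or> E y w" "E w d"
proof -
  have symE: "\<And>x y. E x y \<Longrightarrow> E y x" and EV: "\<And>x y. E x y \<Longrightarrow> x \<in> V \<and> y \<in> V"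
    using sg by (auto simp: simple_graph_def)
  define N where "N = C \<union> {y\<in>V. \<exists>c\<in>C. E c y}"
  show thesis
  proof (cases "\<exists>y\<in>N - C. \<exists>d\<in>D - C. E y d")
    case True
    then obtain c y d where "c \<in> C" "E c y" "y \<in> V" "d \<in> D - C" "E y d"
      by (auto simp: N_def)
    then show thesis
      using that[of c d y y] by blast
  next
    case False
    \<comment> \<open>Then an edge y w leaves the closed neighbourhood N of C; w lies outside D, and a
      vertex of D dominating w is not in C.\<close>
    have "z0 \<notin> N"
      using C closed by (auto simp: N_def)
    moreover have "c0 \<in> N" "N \<subseteq> V"
      using C DV EV by (auto simp: N_def)
    ultimately obtain y w where yw: "y \<in> N" "w \<in> V - N" "E y w"
      using connected_on_exists_crossing_edge[OF con, of N c0 z0] C DV by blast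
    then have "y \<notin> C"
      by (auto simp: N_def)
    with yw obtain c where c: "c \<in> C" "E c y" "y \<in> V"
      by (auto simp: N_def)
    have "w \<notin> C"
      using yw by (simp add: N_def)
    with False yw \<open>y \<notin> C\<close> have "w \<notin> D"
      by blast
    then obtain d where "d \<in> D" "E w d"
      using dom yw by blast
    moreover have "d \<notin> C"
      using \<open>E w d\<close> symE yw by (auto simp: N_def)
    ultimately show thesis
      using that[of c d y w] c yw by blast
  qed
qed

lemma dominating_set_short_bridge:
  assumes sg: "simple_graph V E" and con: "connected_on V E"
    and DV: "D \<subseteq> V" and dom: "\<forall>v\<in>V - D. \<exists>s\<in>D. E v s"
    and r: "r \<in> D" and z0: "z0 \<in> D" "\<not> reachable_in D E r z0"
  obtains P z where "P \<subseteq> V" "card P \<le> 2" "z \<in> D" "\<not> reachable_in D E r z"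
    "\<forall>x\<in>insert z P. reachable_in (D \<union> P) E r x"
proof -
  define C where "C = {x\<in>D. reachable_in D E r x}"
  have C: "C \<subseteq> D" "r \<in> C" "z0 \<in> D - C"
    using r z0 by (auto simp: C_def)
  have closed: "y \<in> C" if "x \<in> C" "y \<in> D" "E x y" for x y
    using that reachable_in_step[of D E r x y] by (simp add: C_def)
  obtain c y w d where c: "c \<in> C" and d: "d \<in> D - C" and yw: "y \<in> V" "w \<in> V"
    and path: "E c y" "y = w \<or> E y w" "E w d"
    by (rule dominating_set_bridge[OF sg con DV dom C closed])
  have "reachable_in D E r c"
    using c by (simp add: C_def)
  then have "reachable_in (D \<union> {y, w}) E r c"
    by (rule reachable_in_mono) blast
  then have ry: "reachable_in (D \<union> {y, w}) E r y"
    using reachable_in_step[of _ E r c y] c C(1) path(1) by blast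
  then have rw: "reachable_in (D \<union> {y, w}) E r w"
    using reachable_in_step[of _ E r y w] path(2) by blast
  then have "reachable_in (D \<union> {y, w}) E r d"
    using reachable_in_step[of _ E r w d] path(3) d by blast
  moreover have "card {y, w} \<le> 2"
    by (simp add: card_insert_if)
  ultimately show thesis
    using that[of "{y, w}" d] d yw ry rw by (auto simp: C_def)
qed

lemma reachable_from_roots_merge:
  assumes symE: "\<And>x y. E x y \<Longrightarrow> E y x"
    and reach: "\<forall>x\<in>D. \<exists>r'\<in>R. reachable_in D E r' x"
    and r: "reachable_in D E r z" and r0: "r0 \<in> R" "r0 \<noteq> r"
    and r0_reaches: "\<forall>x\<in>insert z P. reachable_in (D \<union> P) E r0 x"
  shows "\<forall>x\<in>D \<union> P. \<exists>r'\<in>R - {r}. reachable_in (D \<union> P) E r' x"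
proof
  fix x
  assume x: "x \<in> D \<union> P"
  show "\<exists>r'\<in>R - {r}. reachable_in (D \<union> P) E r' x"
  proof (cases "x \<in> P")
    case True
    then show ?thesis
      using r0 r0_reaches by blast
  next
    case False
    then obtain r1 where r1: "r1 \<in> R" "reachable_in D E r1 x"
      using x reach by blast
    have r1_reaches: "reachable_in (D \<union> P) E r1 x"
      using reachable_in_mono[OF r1(2)] by blast
    show ?thesis
    proof (cases "r1 = r")
      case True
      have "reachable_in (D \<union> P) E r0 z"
        using r0_reaches by blast
      moreover have "reachable_in (D \<union> P) E z r"
        using reachable_in_mono[OF reachable_in_sym[OF symE r]] by blast
      ultimately have "reachable_in (D \<union> P) E r0 x"
        using r1_reaches True reachable_in_trans by metis
      then show ?thesis
        using r0 by blast
    next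
      case False
      then show ?thesis
        using r1 r1_reaches by blast
    qed
  qed
qed

lemma dominating_set_extends_to_connected:
  assumes sg: "simple_graph V E" and con: "connected_on V E"
    and "finite R" "R \<noteq> {}" "R \<subseteq> D" "D \<subseteq> V" "\<forall>v\<in>V - D. \<exists>s\<in>D. E v s"
    and "\<forall>x\<in>D. \<exists>r\<in>R. reachable_in D E r x"
  shows "\<exists>T. connected_dominating_set V E T \<and> card T \<le> card D + 2 * (card R - 1)"
  using assms(3-)
proof (induction "card R" arbitrary: R D rule: less_induct)
  case less
  have symE: "\<And>x y. E x y \<Longrightarrow> E y x"
    using sg by (auto simp: simple_graph_def)
  obtain r0 where r0: "r0 \<in> R"
    using less.prems by blast
  show ?case
  proof (cases "\<forall>x\<in>D. reachable_in D E r0 x")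
    case True
    then have "connected_on D E"
      using connected_on_if_reachable_from[OF symE _ True] r0 less.prems(3) by blast
    then show ?thesis
      using less.prems(4,5) by (intro exI[of _ D]) (simp add: connected_dominating_set_def)
  next
    case False
    then obtain z0 where "z0 \<in> D" "\<not> reachable_in D E r0 z0"
      by blast
    then obtain P z where P: "P \<subseteq> V" "card P \<le> 2" and z: "z \<in> D" "\<not> reachable_in D E r0 z"
      and r0_reaches: "\<forall>x\<in>insert z P. reachable_in (D \<union> P) E r0 x"
      using dominating_set_short_bridge[OF sg con, of D r0 z0] r0 less.prems by blast
    \<comment> \<open>P joins the component of r0 to that of a root r of z, so r is no longer needed.\<close>
    obtain r where r: "r \<in> R" "reachable_in D E r z"
      using z less.prems by blast
    with z r0 have "r0 \<in> R - {r}"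
      by blast
    have card_R: "card R = Suc (card (R - {r}))"
      by (rule card_Suc_Diff1[OF less.prems(1) r(1), symmetric])
    have "\<forall>x\<in>D \<union> P. \<exists>r'\<in>R - {r}. reachable_in (D \<union> P) E r' x"
      using reachable_from_roots_merge[OF symE less.prems(6) r(2)] r0_reaches \<open>r0 \<in> R - {r}\<close>
      by blast
    moreover have "card (R - {r}) < card R" "finite (R - {r})" "R - {r} \<noteq> {}"
      "R - {r} \<subseteq> D \<union> P" "D \<union> P \<subseteq> V" "\<forall>v\<in>V - (D \<union> P). \<exists>s\<in>D \<union> P. E v s"
      using card_R less.prems P \<open>r0 \<in> R - {r}\<close> by auto
    ultimately obtain T where T: "connected_dominating_set V E T"
      "card T \<le> card (D \<union> P) + 2 * (card (R - {r}) - 1)"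
      using less.hyps[of "R - {r}" "D \<union> P"] by blast
    have "card (D \<union> P) \<le> card D + 2"
      using card_Un_le[of D P] P(2) by simp
    moreover have "card (R - {r}) \<ge> 1"
      using \<open>finite (R - {r})\<close> \<open>R - {r} \<noteq> {}\<close> card_gt_0_iff[of "R - {r}"] by linarith
    ultimately show ?thesis
      using T card_R by (intro exI[of _ T]) auto
  qed
qed

lemma conn_dom_number_le:
  assumes "connected_dominating_set V E S"
  shows "conn_dom_number V E \<le> card S"
  using assms unfolding conn_dom_number_def by (blast intro: Least_le)

lemma obtain_min_connected_dominating_set:
  assumes "connected_on V E"
  obtains S where "connected_dominating_set V E S" "card S = conn_dom_number V E"
proof -
  have "connected_dominating_set V E V"
    using assms by (simp add: connected_dominating_set_def)
  then show thesis
    using that LeastI_ex[of "\<lambda>n. \<exists>S. connected_dominating_set V E S \<and> card S = n"]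
    unfolding conn_dom_number_def by blast
qed

lemma cover_lift_edge:
  assumes "is_cover VG EG VF EF p" "v \<in> VG" "u \<in> VF" "EF (p v) u"
  obtains w where "w \<in> VG" "EG v w" "p w = u"
proof -
  have "p ` neighbours VG EG v = neighbours VF EF (p v)"
    using assms(1,2) by (simp add: is_cover_def bij_betw_def)
  moreover have "u \<in> neighbours VF EF (p v)"
    using assms(3,4) by (simp add: neighbours_def)
  ultimately obtain w where "u = p w" "w \<in> neighbours VG EG v"
    by (metis imageE)
  then show thesis
    using that by (auto simp: neighbours_def)
qed

lemma cover_lift_walk:
  assumes cov: "is_cover VG EG VF EF p" and SV: "S \<subseteq> VF"
    and walk: "reachable_in S EF a b"
    and x: "x \<in> VG" "p x \<in> S" "p x = a"
  shows "\<exists>y. p y = b \<and> reachable_in {v\<in>VG. p v \<in> S} EG x y"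
  using walk unfolding reachable_in_def[of S]
proof (induction rule: rtranclp_induct)
  case base
  show ?case
    using x by auto
next
  case (step b c)
  from step.hyps(2) have bc: "b \<in> S" "c \<in> S" "EF b c"
    by simp_all
  from step.IH obtain y where y: "p y = b" "reachable_in {v\<in>VG. p v \<in> S} EG x y"
    by (elim exE conjE)
  have y_in: "y \<in> {v\<in>VG. p v \<in> S}"
    using reachable_in_closed[OF y(2)] x by simp
  then obtain y' where "y' \<in> VG" "EG y y'" "p y' = c"
    using cover_lift_edge[OF cov, of y c] bc y(1) SV by blast
  then show ?case
    using reachable_in_step[OF y(2) y_in] bc by blast
qed

lemma cover_preimage_dominating:
  assumes cov: "is_cover VG EG VF EF p" and SV: "S \<subseteq> VF"
    and dom: "\<forall>u\<in>VF - S. \<exists>s\<in>S. EF u s"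
  shows "\<forall>v\<in>VG - {v\<in>VG. p v \<in> S}. \<exists>s\<in>{v\<in>VG. p v \<in> S}. EG v s"
proof
  fix v
  assume v: "v \<in> VG - {v\<in>VG. p v \<in> S}"
  then have "p v \<in> VF - S"
    using cov by (auto simp: is_cover_def)
  then obtain s where s: "s \<in> S" "EF (p v) s"
    using dom by blast
  then obtain w where "w \<in> VG" "EG v w" "p w = s"
    using cover_lift_edge[OF cov, of v s] v SV by blast
  then show "\<exists>s\<in>{v\<in>VG. p v \<in> S}. EG v s"
    using s by blast
qed

lemma card_preimage_k_fold_cover:
  assumes "is_k_fold_cover k VG EG VF EF p" "finite VG" "S \<subseteq> VF"
  shows "card {v\<in>VG. p v \<in> S} = k * card S"
proof -
  have "finite VF"
    using assms(1,2) by (auto simp: is_k_fold_cover_def is_cover_def)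
  then have "finite S"
    using assms(3) finite_subset by blast
  have "{v\<in>VG. p v \<in> S} = (\<Union>u\<in>S. {v\<in>VG. p v = u})"
    by auto
  also have "card \<dots> = (\<Sum>u\<in>S. card {v\<in>VG. p v = u})"
    using \<open>finite S\<close> assms(2) by (intro card_UN_disjoint) auto
  also have "\<dots> = (\<Sum>u\<in>S. k)"
    using assms(1,3) by (intro sum.cong) (auto simp: is_k_fold_cover_def)
  finally show ?thesis
    by simp
qed

lemma cover_preimage_reachable_from_fibre:
  assumes cov: "is_cover VG EG VF EF p" and symG: "\<And>x y. EG x y \<Longrightarrow> EG y x"
    and SV: "S \<subseteq> VF" and conS: "connected_on S EF" and s0: "s0 \<in> S"
  shows "\<forall>x\<in>{v\<in>VG. p v \<in> S}. \<exists>r\<in>{v\<in>VG. p v = s0}. reachable_in {v\<in>VG. p v \<in> S} EG r x"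
proof
  fix x
  assume x: "x \<in> {v\<in>VG. p v \<in> S}"
  then have x': "x \<in> VG" "p x \<in> S"
    by simp_all
  then have walk: "reachable_in S EF (p x) s0"
    using conS s0 by (auto simp: connected_on_iff_reachable_in)
  obtain y where y: "p y = s0" "reachable_in {v\<in>VG. p v \<in> S} EG x y"
    using cover_lift_walk[OF cov SV walk x' refl] by (elim exE conjE)
  then have "y \<in> {v\<in>VG. p v = s0}"
    using reachable_in_closed[OF y(2) x] by simp
  then show "\<exists>r\<in>{v\<in>VG. p v = s0}. reachable_in {v\<in>VG. p v \<in> S} EG r x"
    using reachable_in_sym[OF symG y(2)] by blast
qed

theorem conn_dom_number_k_fold_cover_le:
  assumes cF: "connected_graph VF EF" and cG: "connected_graph VG EG"
    and cov: "is_k_fold_cover k VG EG VF EF p"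
  shows "conn_dom_number VG EG \<le> k * (conn_dom_number VF EF + 2) - 2"
proof -
  have sgG: "simple_graph VG EG" and conG: "connected_on VG EG" and conF: "connected_on VF EF"
    using cF cG by (auto simp: connected_graph_def)
  have symG: "\<And>x y. EG x y \<Longrightarrow> EG y x" and finG: "finite VG"
    using sgG by (auto simp: simple_graph_def)
  have isc: "is_cover VG EG VF EF p"
    using cov by (simp add: is_k_fold_cover_def)
  obtain S where S: "connected_dominating_set VF EF S" "card S = conn_dom_number VF EF"
    using obtain_min_connected_dominating_set[OF conF] .
  then have SV: "S \<subseteq> VF" and domS: "\<forall>u\<in>VF - S. \<exists>s\<in>S. EF u s" and conS: "connected_on S EF"
    by (auto simp: connected_dominating_set_def)
  obtain s0 where s0: "s0 \<in> S"
    using conS by (auto simp: connected_on_def)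
  define D where "D = {v\<in>VG. p v \<in> S}"
  define R where "R = {v\<in>VG. p v = s0}"
  have card_R: "card R = k"
    using cov s0 SV by (auto simp: R_def is_k_fold_cover_def)
  have "R \<noteq> {}" "finite R" "R \<subseteq> D" "D \<subseteq> VG"
    using isc s0 SV finG by (force simp: R_def D_def is_cover_def)+
  moreover have "\<forall>v\<in>VG - D. \<exists>s\<in>D. EG v s"
    unfolding D_def by (rule cover_preimage_dominating[OF isc SV domS])
  moreover have "\<forall>x\<in>D. \<exists>r\<in>R. reachable_in D EG r x"
    unfolding D_def R_def by (rule cover_preimage_reachable_from_fibre[OF isc symG SV conS s0])
  ultimately obtain T where "connected_dominating_set VG EG T" "card T \<le> card D + 2 * (k - 1)"
    using dominating_set_extends_to_connected[OF sgG conG] card_R by metis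
  moreover have "card D = k * card S"
    unfolding D_def by (rule card_preimage_k_fold_cover[OF cov finG SV])
  moreover have "k \<noteq> 0"
    using card_R \<open>finite R\<close> \<open>R \<noteq> {}\<close> by auto
  ultimately show ?thesis
    using conn_dom_number_le[of VG EG T] S(2) by (cases k) (auto simp: algebra_simps)
qed

lemma connected_dominating_set_image:
  assumes "bij_betw g V V" "\<And>x y. x \<in> V \<Longrightarrow> y \<in> V \<Longrightarrow> E x y \<Longrightarrow> E (g x) (g y)"
    and "connected_dominating_set V E S"
  shows "connected_dominating_set V E (g ` S)"
proof -
  have SV: "S \<subseteq> V" and dom: "\<forall>v\<in>V - S. \<exists>s\<in>S. E v s" and con: "connected_on S E"
    using assms(3) by (auto simp: connected_dominating_set_def)
  have "g ` S \<subseteq> V"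
    using assms(1) SV by (auto simp: bij_betw_def)
  moreover have "\<exists>s\<in>g ` S. E v s" if v: "v \<in> V - g ` S" for v
  proof -
    have "v \<in> g ` V"
      using v assms(1) by (simp add: bij_betw_def)
    then obtain w where w: "v = g w" "w \<in> V"
      by (rule imageE)
    then obtain s where "s \<in> S" "E w s"
      using v dom by blast
    then show ?thesis
      using assms(2) w SV by blast
  qed
  moreover have "connected_on (g ` S) E"
    unfolding connected_on_iff_reachable_in
  proof (intro conjI ballI)
    show "g ` S \<noteq> {}"
      using con by (auto simp: connected_on_def)
  next
    fix u v
    assume "u \<in> g ` S" "v \<in> g ` S"
    then obtain x y where "x \<in> S" "y \<in> S" "u = g x" "v = g y"
      by blast
    then show "reachable_in (g ` S) E u v"
      using reachable_in_image[of S E x y E g] assms(2) SV con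
      by (auto simp: connected_on_iff_reachable_in)
  qed
  ultimately show ?thesis
    by (simp add: connected_dominating_set_def)
qed

lemma connected_on_unit_steps_imp_interval:
  fixes S :: "nat set"
  assumes "connected_on S E" "finite S"
    and steps: "\<And>x y. x \<in> S \<Longrightarrow> y \<in> S \<Longrightarrow> E x y \<Longrightarrow> y = Suc x \<or> x = Suc y"
  shows "S = {Min S..Max S}"
proof
  have "S \<noteq> {}"
    using assms(1) by (simp add: connected_on_def)
  then show "S \<subseteq> {Min S..Max S}"
    using assms(2) by auto
  show "{Min S..Max S} \<subseteq> S"
  proof
    fix t
    assume t: "t \<in> {Min S..Max S}"
    show "t \<in> S"
    proof (rule ccontr)
      assume "t \<notin> S"
      have "Min S \<in> S" "Max S \<in> S"
        using \<open>S \<noteq> {}\<close> assms(2) by simp_all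
      with t \<open>t \<notin> S\<close> have "Min S \<in> {s\<in>S. s < t}" "Max S \<in> S - {s\<in>S. s < t}"
        by (auto simp: order.order_iff_strict)
      then obtain y w where "y \<in> S" "y < t" "w \<in> S" "\<not> w < t" "E y w"
        using connected_on_exists_crossing_edge[OF assms(1), of "{s\<in>S. s < t}"] by blast
      then show False
        using steps[of y w] \<open>t \<notin> S\<close> by (cases "w = t") auto
    qed
  qed
qed

lemma mod_add_complement:
  fixes a n v :: nat
  assumes "a \<le> n" "v < n"
  shows "((v + a) mod n + (n - a)) mod n = v"
proof -
  have "((v + a) mod n + (n - a)) mod n = (v + a + (n - a)) mod n"
    by (simp add: mod_add_left_eq)
  also have "\<dots> = v"
    using assms by simp
  finally show ?thesis .
qed

definition cycle_adj :: "nat \<Rightarrow> nat \<Rightarrow> nat \<Rightarrow> bool" where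
  "cycle_adj n i j \<longleftrightarrow> i < n \<and> j < n \<and> (j = Suc i mod n \<or> i = Suc j mod n)"

lemma simple_graph_cycle: "n \<ge> 3 \<Longrightarrow> simple_graph {0..<n} (cycle_adj n)"
  by (auto simp: simple_graph_def cycle_adj_def mod_Suc)

lemma connected_on_cycle_interval:
  assumes "lo \<le> hi" "hi < n"
  shows "connected_on {lo..hi} (cycle_adj n)"
proof (rule connected_on_if_reachable_from)
  show "cycle_adj n x y \<Longrightarrow> cycle_adj n y x" for x y
    by (auto simp: cycle_adj_def)
  show "lo \<in> {lo..hi}"
    using assms(1) by simp
  have "x \<le> hi \<longrightarrow> reachable_in {lo..hi} (cycle_adj n) lo x" if "lo \<le> x" for x
    using that
  proof (induction x rule: nat_induct_at_least)
    case (Suc x)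
    have "Suc x \<le> hi \<Longrightarrow> cycle_adj n x (Suc x)"
      using assms(2) by (simp add: cycle_adj_def)
    then show ?case
      using Suc reachable_in_step[of "{lo..hi}" "cycle_adj n" lo x "Suc x"] by simp
  qed simp
  then show "\<forall>x\<in>{lo..hi}. reachable_in {lo..hi} (cycle_adj n) lo x"
    by simp
qed

lemma connected_graph_cycle: "n \<ge> 3 \<Longrightarrow> connected_graph {0..<n} (cycle_adj n)"
  using simple_graph_cycle connected_on_cycle_interval[of 0 "n - 1" n]
  by (simp add: connected_graph_def atLeastLessThanSuc_atLeastAtMost[symmetric])

lemma connected_dominating_set_cycle: "n \<ge> 3 \<Longrightarrow> connected_dominating_set {0..<n} (cycle_adj n) {0..n-3}"
  unfolding connected_dominating_set_def
  using connected_on_cycle_interval[of 0 "n - 3" n]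
  by (auto simp: cycle_adj_def mod_Suc intro: bexI[of _ 0] bexI[of _ "n - 3"])

lemma cycle_connected_set_avoiding_0_is_interval:
  assumes "connected_on S (cycle_adj n)" "S \<subseteq> {0..<n}" "0 \<notin> S"
  shows "S = {Min S..Max S}"
proof (rule connected_on_unit_steps_imp_interval[OF assms(1)])
  show "finite S"
    using assms(2) finite_subset by blast
  fix x y
  assume "x \<in> S" "y \<in> S" "cycle_adj n x y"
  then show "y = Suc x \<or> x = Suc y"
    using assms(3) by (auto simp: cycle_adj_def mod_Suc split: if_splits)
qed

lemma cycle_connected_dominating_set_avoiding_0_card_ge:
  assumes n: "n \<ge> 3" and cds: "connected_dominating_set {0..<n} (cycle_adj n) S" and "0 \<notin> S"
  shows "n - 2 \<le> card S"
proof -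
  have SV: "S \<subseteq> {0..<n}" and dom: "\<forall>v\<in>{0..<n} - S. \<exists>s\<in>S. cycle_adj n v s"
    and con: "connected_on S (cycle_adj n)"
    using cds by (auto simp: connected_dominating_set_def)
  obtain lo hi where S: "S = {lo..hi}"
    using cycle_connected_set_avoiding_0_is_interval[OF con SV \<open>0 \<notin> S\<close>] by blast
  have "lo \<le> hi" "0 < lo" "hi < n"
    using S SV con \<open>0 \<notin> S\<close> by (auto simp: connected_on_def)
  have dominated: "\<exists>s\<in>S. cycle_adj n v s" if "v < n" "v \<notin> S" for v
    using dom that by auto
  have "\<exists>s\<in>S. cycle_adj n 0 s"
    using dominated[of 0] n \<open>0 \<notin> S\<close> by simp
  then obtain s where "s \<in> S" "cycle_adj n 0 s"
    by blast
  then have "1 \<in> S \<or> n - 1 \<in> S"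
    using n by (auto simp: cycle_adj_def mod_Suc split: if_splits)
  moreover have "lo \<le> 2"
  proof (rule ccontr)
    assume "\<not> lo \<le> 2"
    then obtain s where "s \<in> S" "cycle_adj n 1 s"
      using dominated[of 1] S n by auto
    then have "s = 0 \<or> s = 2"
      using n by (auto simp: cycle_adj_def mod_Suc split: if_splits)
    then show False
      using \<open>s \<in> S\<close> \<open>\<not> lo \<le> 2\<close> \<open>0 \<notin> S\<close> S by auto
  qed
  moreover have "n - 2 \<le> hi"
  proof (rule ccontr)
    assume "\<not> n - 2 \<le> hi"
    then have "n - 1 \<notin> S"
      using S by auto
    then have "\<exists>s\<in>S. cycle_adj n (n - 1) s"
      using dominated[of "n - 1"] n by simp
    then obtain s where "s \<in> S" "cycle_adj n (n - 1) s"
      by blast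
    then have "s = 0 \<or> s = n - 2"
      using n by (auto simp: cycle_adj_def mod_Suc split: if_splits)
    then show False
      using \<open>s \<in> S\<close> \<open>\<not> n - 2 \<le> hi\<close> \<open>0 \<notin> S\<close> S by auto
  qed
  ultimately show ?thesis
    using S \<open>lo \<le> hi\<close> \<open>0 < lo\<close> \<open>hi < n\<close> by auto
qed

lemma cycle_rotation_bij:
  fixes a n :: nat
  assumes "a \<le> n" "0 < n"
  shows "bij_betw (\<lambda>v. (v + a) mod n) {0..<n} {0..<n}"
proof (rule bij_betw_byWitness[where f' = "\<lambda>v. (v + (n - a)) mod n"])
  show "\<forall>v\<in>{0..<n}. ((v + a) mod n + (n - a)) mod n = v"
    using mod_add_complement assms(1) by simp
  show "\<forall>v\<in>{0..<n}. ((v + (n - a)) mod n + a) mod n = v"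
  proof
    fix v
    assume "v \<in> {0..<n}"
    then show "((v + (n - a)) mod n + a) mod n = v"
      using mod_add_complement[of "n - a" n v] assms(1) by simp
  qed
qed (use assms in auto)

lemma cycle_adj_rotation:
  "cycle_adj n x y \<Longrightarrow> cycle_adj n ((x + a) mod n) ((y + a) mod n)"
  by (auto simp: cycle_adj_def mod_simps)

lemma cycle_connected_dominating_set_card_ge:
  assumes n: "n \<ge> 3" and cds: "connected_dominating_set {0..<n} (cycle_adj n) S"
  shows "n - 2 \<le> card S"
proof (cases "{0..<n} \<subseteq> S")
  case True
  then show ?thesis
    using cds by (auto simp: connected_dominating_set_def dest: card_mono[rotated])
next
  case False
  then obtain a where "a \<in> {0..<n}" "a \<notin> S"
    by blast
  then have a: "a < n" "a \<notin> S"
    by simp_all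
  define g where "g v = (v + (n - a)) mod n" for v
  have bij: "bij_betw g {0..<n} {0..<n}"
    unfolding g_def using cycle_rotation_bij n by simp
  have SV: "S \<subseteq> {0..<n}"
    using cds by (simp add: connected_dominating_set_def)
  have "connected_dominating_set {0..<n} (cycle_adj n) (g ` S)"
    using connected_dominating_set_image[OF bij _ cds] cycle_adj_rotation by (simp add: g_def)
  moreover have "0 \<notin> g ` S"
  proof
    assume "0 \<in> g ` S"
    moreover have "g a = 0"
      using a by (simp add: g_def)
    ultimately obtain x where "x \<in> S" "g x = g a"
      by auto
    then have "x = a"
      using inj_onD[OF bij_betw_imp_inj_on[OF bij]] SV a(1) by auto
    then show False
      using \<open>x \<in> S\<close> a(2) by simp
  qed
  moreover have "card (g ` S) = card S"
    using bij SV by (meson bij_betw_imp_inj_on card_image inj_on_subset)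
  ultimately show ?thesis
    using cycle_connected_dominating_set_avoiding_0_card_ge[OF n] by metis
qed

lemma conn_dom_number_cycle:
  assumes "n \<ge> 3"
  shows "conn_dom_number {0..<n} (cycle_adj n) = n - 2"
  unfolding conn_dom_number_def
proof (rule Least_equality)
  show "\<exists>S. connected_dominating_set {0..<n} (cycle_adj n) S \<and> card S = n - 2"
    using connected_dominating_set_cycle[OF assms] assms by (intro exI[of _ "{0..n-3}"]) auto
qed (use cycle_connected_dominating_set_card_ge[OF assms] in blast)

lemma cycle_succ_ne_pred:
  assumes "m \<ge> 3" "u < m"
  shows "Suc u mod m \<noteq> (u + (m - 1)) mod m"
proof
  assume eq: "Suc u mod m = (u + (m - 1)) mod m"
  have "(Suc u mod m + 1) mod m = ((u + (m - 1)) mod m + 1) mod m"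
    by (simp only: eq)
  then have "(u + 2) mod m = u"
    using mod_add_complement[of "m - 1" m u] assms by (simp add: mod_simps)
  then show False
    using assms by (cases "u + 2 < m") (auto simp: le_mod_geq)
qed

lemma neighbours_cycle:
  assumes "n \<ge> 3" "v < n"
  shows "neighbours {0..<n} (cycle_adj n) v = {Suc v mod n, (v + (n - 1)) mod n}"
proof -
  have "v = Suc w mod n \<longleftrightarrow> w = (v + (n - 1)) mod n" if "w < n" for w
    using mod_add_complement[of 1 n w] mod_add_complement[of "n - 1" n v] assms that
    by auto
  then show ?thesis
    using assms by (auto simp: neighbours_def cycle_adj_def)
qed

lemma card_residue_class:
  fixes m k u :: nat
  assumes "u < m"
  shows "card {v\<in>{0..<k * m}. v mod m = u} = k"
proof -
  have "{v\<in>{0..<k * m}. v mod m = u} = (\<lambda>j. j * m + u) ` {0..<k}"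
  proof (intro set_eqI iffI)
    fix v
    assume "v \<in> {v\<in>{0..<k * m}. v mod m = u}"
    then have "v = v div m * m + u" "v div m < k"
      by (auto simp: less_mult_imp_div_less)
    then show "v \<in> (\<lambda>j. j * m + u) ` {0..<k}"
      by (metis atLeastLessThan_iff image_eqI zero_le)
  next
    fix v
    assume "v \<in> (\<lambda>j. j * m + u) ` {0..<k}"
    then obtain j where "j < k" "v = j * m + u"
      by auto
    moreover have "j * m + u < Suc j * m"
      using assms by simp
    moreover have "Suc j * m \<le> k * m"
      using \<open>j < k\<close> by (intro mult_le_mono1) simp
    ultimately show "v \<in> {v\<in>{0..<k * m}. v mod m = u}"
      using assms by simp
  qed
  moreover have "inj_on (\<lambda>j. j * m + u) {0..<k}"
    using assms by (auto simp: inj_on_def)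
  ultimately show ?thesis
    by (simp add: card_image)
qed

lemma cycle_mod_k_fold_cover:
  assumes m: "m \<ge> 3" and k: "k \<ge> 1"
  shows "is_k_fold_cover k {0..<k * m} (cycle_adj (k * m)) {0..<m} (cycle_adj m) (\<lambda>v. v mod m)"
proof -
  define n where "n = k * m"
  have "m \<le> n"
    using mult_le_mono1[OF k, of m] by (simp add: n_def)
  have n: "n \<ge> 3" "m dvd n"
    using m \<open>m \<le> n\<close> by (simp, simp add: n_def)
  have "(\<lambda>v. v mod m) ` {0..<n} = {0..<m}"
  proof
    show "{0..<m} \<subseteq> (\<lambda>v. v mod m) ` {0..<n}"
    proof
      fix u
      assume "u \<in> {0..<m}"
      then show "u \<in> (\<lambda>v. v mod m) ` {0..<n}"
        using \<open>m \<le> n\<close> by (intro image_eqI[of u _ u]) auto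
    qed
  qed (use m in auto)
  moreover have "bij_betw (\<lambda>v. v mod m) (neighbours {0..<n} (cycle_adj n) v)
      (neighbours {0..<m} (cycle_adj m) (v mod m))" if "v \<in> {0..<n}" for v
  proof -
    have succ: "Suc v mod n mod m = Suc (v mod m) mod m"
      using n(2) by (simp add: mod_mod_cancel mod_Suc_eq)
    have "n - 1 = (m - 1) + (k - 1) * m"
      using m k by (simp add: n_def algebra_simps)
    then have pred: "(v + (n - 1)) mod n mod m = (v mod m + (m - 1)) mod m"
      using n(2) by (simp add: mod_mod_cancel mod_simps add.assoc[symmetric])
    have "Suc (v mod m) mod m \<noteq> (v mod m + (m - 1)) mod m"
      using cycle_succ_ne_pred m by simp
    then show ?thesis
      using neighbours_cycle[OF n(1)] neighbours_cycle[OF m] that m succ pred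
      by (auto simp: bij_betw_def inj_on_def)
  qed
  ultimately show ?thesis
    using card_residue_class
    by (auto simp: is_k_fold_cover_def is_cover_def n_def)
qed

lemma conn_dom_number_k_fold_cover_bound_attained:
  assumes "k > 0"
  shows "\<exists>(VF :: nat set) EF (VG :: nat set) EG p.
    connected_graph VF EF \<and> connected_graph VG EG \<and> is_k_fold_cover k VG EG VF EF p
    \<and> conn_dom_number VG EG = k * (conn_dom_number VF EF + 2) - 2"
proof (intro exI conjI)
  show "is_k_fold_cover k {0..<k * 3} (cycle_adj (k * 3)) {0..<3} (cycle_adj 3) (\<lambda>v. v mod 3)"
    using assms by (intro cycle_mod_k_fold_cover) auto
  show "connected_graph {0..<3} (cycle_adj 3)" "connected_graph {0..<k * 3} (cycle_adj (k * 3))"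
    using assms by (auto intro: connected_graph_cycle)
  show "conn_dom_number {0..<k * 3} (cycle_adj (k * 3)) =
      k * (conn_dom_number {0..<3} (cycle_adj 3) + 2) - 2"
    using assms by (simp add: conn_dom_number_cycle)
qed

theorem theorem2p15:
  shows "(\<forall>(VF :: 'b set) EF (VG :: 'a set) EG p k.
            connected_graph VF EF \<and> connected_graph VG EG \<and> is_k_fold_cover k VG EG VF EF p
            \<longrightarrow> conn_dom_number VG EG \<le> k * (conn_dom_number VF EF + 2) - 2)
       \<and> (\<forall>k::nat. k > 0 \<longrightarrow>
            (\<exists>(VF :: nat set) EF (VG :: nat set) EG p.
              connected_graph VF EF \<and> connected_graph VG EG \<and> is_k_fold_cover k VG EG VF EF p
              \<and> conn_dom_number VG EG = k * (conn_dom_number VF EF + 2) - 2))"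
  using conn_dom_number_k_fold_cover_le conn_dom_number_k_fold_cover_bound_attained by blast

end
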